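(* Let $r,n\ge2$, $\pi=A_1\cdots A_n\in\mathbb{S}_{2rn}$ with $A_j=(2r(j-1)+1\ \cdots\ 2rj)$, and $\mathcal{C}$ its conjugacy class. Let $t\in\mathcal{C}$ with $t\pi=\pi t$ and let $g\in\mathbb{S}_{2rn}$ with $g\pi g^{-1}=t$. Write $t=A_1^{d_1}\cdots A_n^{d_n}B$ and $g^{-1}\pi g=A_1^{e_1}\cdots A_n^{e_n}B'$ with $B,B'\in\langle B_1,\dots,B_{n-1}\rangle$. Then $\Phi(B)$ and $\Phi(B')$ have the same cycle type in $\mathbb{S}_n$.
   Context: Permutations are composed right to left. $B_i$ ($1\le i\le n-1$) is the involution exchanging $2r(i-1)+m\leftrightarrow 2ri+m$ for $1\le m\le 2r$. The centralizer of $\pi$ is $\mathbb{S}_{2rn}^\pi=\langle A_1,\dots,A_n\rangle\rtimes\langle B_1,\dots,B_{n-1}\rangle\cong\mathbb{Z}_{2r}^n\rtimes\mathbb{S}_n$, so every element of it is uniquely written $A_1^{d_1}\cdots A_n^{d_n}B$ with $0\le d_j\le 2r-1$ and $B\in\langle B_1,\dots,B_{n-1}\rangle$ (both $t$ and $g^{-1}\pi g$ lie in it). $\Phi:\langle B_1,\dots,B_{n-1}\rangle\to\mathbb{S}_n$ is the group isomorphism with $\Phi(B_i)=(i\ i+1)$. *)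

theory Defs
  imports "HOL-Combinatorics.Permutations" "HOL-Library.Multiset"
begin

text \<open>Permutations of {1..2rn} are functions nat => nat with 'permutes';
  composition is right to left: (f o g) x = f (g x).\<close>

definition Acyc :: "nat \<Rightarrow> nat \<Rightarrow> nat \<Rightarrow> nat" where
  "Acyc r j x = (if 2*r*(j-1) + 1 \<le> x \<and> x < 2*r*j then x + 1
                 else if x = 2*r*j then 2*r*(j-1) + 1 else x)"

definition piperm :: "nat \<Rightarrow> nat \<Rightarrow> nat \<Rightarrow> nat" where
  "piperm r n = foldr (\<lambda>j f. Acyc r j \<circ> f) [1..<n+1] id"

definition Aprod :: "nat \<Rightarrow> nat \<Rightarrow> (nat \<Rightarrow> nat) \<Rightarrow> nat \<Rightarrow> nat" where
  "Aprod r n d = foldr (\<lambda>j f. (Acyc r j ^^ d j) \<circ> f) [1..<n+1] id"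

definition Bgen :: "nat \<Rightarrow> nat \<Rightarrow> nat \<Rightarrow> nat" where
  "Bgen r i x = (if 2*r*(i-1) < x \<and> x \<le> 2*r*i then x + 2*r
                 else if 2*r*i < x \<and> x \<le> 2*r*(i+1) then x - 2*r else x)"

text \<open>The subgroup generated by B_1, ..., B_{n-1} (generators are involutions,
  so the generated monoid is the generated group).\<close>
inductive_set Bgroup :: "nat \<Rightarrow> nat \<Rightarrow> (nat \<Rightarrow> nat) set" for r n where
  Bgroup_id: "id \<in> Bgroup r n"
| Bgroup_step: "B \<in> Bgroup r n \<Longrightarrow> 1 \<le> i \<Longrightarrow> i < n \<Longrightarrow> Bgen r i \<circ> B \<in> Bgroup r n"

text \<open>Phi: the permutation of the blocks {1..n} induced by B (so Phi(B_i) = (i i+1)).\<close>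
definition Phi :: "nat \<Rightarrow> nat \<Rightarrow> (nat \<Rightarrow> nat) \<Rightarrow> nat \<Rightarrow> nat" where
  "Phi r n B j = (if 1 \<le> j \<and> j \<le> n then (B (2*r*(j-1) + 1) - 1) div (2*r) + 1 else j)"

definition cyc_orbit :: "(nat \<Rightarrow> nat) \<Rightarrow> nat \<Rightarrow> nat set" where
  "cyc_orbit \<sigma> x = {(\<sigma> ^^ k) x | k. True}"

definition cycle_type :: "(nat \<Rightarrow> nat) \<Rightarrow> nat \<Rightarrow> nat multiset" where
  "cycle_type \<sigma> n = image_mset card (mset_set (cyc_orbit \<sigma> ` {1..n}))"

end

theory Submission
  imports Defs
begin

text \<open>The permutations \<open>\<pi>\<close> and \<open>t\<close> commute, so the orbits of the group \<open>\<langle>\<pi>, t\<rangle>\<close> are the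
  sets reached by \<open>\<pi>\<^sup>a t\<^sup>b\<close>. Now \<open>\<pi>\<close> is transitive on each block of \<open>2r\<close> consecutive points,
  while \<open>t = A\<^sub>1^d\<^sub>1 \<cdots> A\<^sub>n^d\<^sub>n B\<close> permutes the blocks as \<open>\<Phi>(B)\<close>; hence every orbit is the union of
  the blocks of one cycle of \<open>\<Phi>(B)\<close>, and the cycle type of \<open>\<Phi>(B)\<close> is the multiset of orbit
  sizes divided by \<open>2r\<close>. Conjugation by \<open>g\<close> exchanges the roles of \<open>\<pi>\<close> and \<open>t\<close>: \<open>t\<close> is
  transitive on the \<open>g\<close>-images of the blocks, which \<open>\<pi>\<close> permutes as \<open>\<Phi>(B')\<close>. So the same
  orbits also yield the cycle type of \<open>\<Phi>(B')\<close>.\<close>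

section \<open>Joint orbits over a fibration\<close>

definition joint_orbit :: "('a \<Rightarrow> 'a) \<Rightarrow> ('a \<Rightarrow> 'a) \<Rightarrow> 'a \<Rightarrow> 'a set" where
  "joint_orbit P T x = {(P ^^ a) ((T ^^ b) x) | a b. True}"

lemma funpow_commute:
  assumes "f \<circ> g = g \<circ> f"
  shows "(f ^^ a) ((g ^^ b) x) = (g ^^ b) ((f ^^ a) x)"
proof -
  have "f ((g ^^ b) y) = (g ^^ b) (f y)" for y
    using fun_cong[OF assms] by (induction b) simp_all
  then show ?thesis by (induction a) simp_all
qed

lemma joint_orbit_commute:
  assumes "P \<circ> T = T \<circ> P"
  shows "joint_orbit T P = joint_orbit P T"
proof
  fix x
  have "joint_orbit T P x = {(P ^^ b) ((T ^^ a) x) | a b. True}"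
    unfolding joint_orbit_def using funpow_commute[OF assms] by metis
  then show "joint_orbit T P x = joint_orbit P T x"
    unfolding joint_orbit_def by blast
qed

lemma funpow_closed: "(\<And>x. x \<in> X \<Longrightarrow> f x \<in> X) \<Longrightarrow> x \<in> X \<Longrightarrow> (f ^^ k) x \<in> X"
  by (induction k) auto

lemma funpow_conjugate:
  assumes "bij g"
  shows "(g \<circ> f \<circ> inv g) ^^ k = g \<circ> f ^^ k \<circ> inv g"
proof (induction k)
  case 0
  show ?case using bij_is_surj[OF assms] by (simp add: surj_iff)
next
  case (Suc k)
  then show ?case using bij_is_inj[OF assms] by (simp add: fun_eq_iff)
qed

locale orbit_fibration =
  fixes X :: "'a set" and P T :: "'a \<Rightarrow> 'a" and p :: "'a \<Rightarrow> nat"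
    and \<sigma> :: "nat \<Rightarrow> nat" and n c :: nat
  assumes finite_X: "finite X"
    and P_closed: "x \<in> X \<Longrightarrow> P x \<in> X"
    and T_closed: "x \<in> X \<Longrightarrow> T x \<in> X"
    and image_p: "p ` X = {1..n}"
    and p_P: "x \<in> X \<Longrightarrow> p (P x) = p x"
    and p_T: "x \<in> X \<Longrightarrow> p (T x) = \<sigma> (p x)"
    and fibre_orbit: "x \<in> X \<Longrightarrow> y \<in> X \<Longrightarrow> p x = p y \<Longrightarrow> \<exists>k. y = (P ^^ k) x"
    and card_fibre: "j \<in> {1..n} \<Longrightarrow> card {x \<in> X. p x = j} = c"
begin

lemma p_funpow_P: "x \<in> X \<Longrightarrow> p ((P ^^ k) x) = p x"
  by (induction k) (simp_all add: p_P funpow_closed P_closed)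

lemma p_funpow_T: "x \<in> X \<Longrightarrow> p ((T ^^ k) x) = (\<sigma> ^^ k) (p x)"
  by (induction k) (simp_all add: p_T funpow_closed T_closed)

lemma cyc_orbit_subset: "x \<in> X \<Longrightarrow> cyc_orbit \<sigma> (p x) \<subseteq> {1..n}"
  using image_p by (auto simp: cyc_orbit_def p_funpow_T[symmetric] funpow_closed T_closed)

lemma joint_orbit_eq_preimage:
  assumes "x \<in> X"
  shows "joint_orbit P T x = {y \<in> X. p y \<in> cyc_orbit \<sigma> (p x)}"
proof
  show "joint_orbit P T x \<subseteq> {y \<in> X. p y \<in> cyc_orbit \<sigma> (p x)}"
    using assms by (auto simp: joint_orbit_def cyc_orbit_def p_funpow_P p_funpow_T
        funpow_closed P_closed T_closed)
  show "{y \<in> X. p y \<in> cyc_orbit \<sigma> (p x)} \<subseteq> joint_orbit P T x"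
  proof clarify
    fix y assume "y \<in> X" "p y \<in> cyc_orbit \<sigma> (p x)"
    then obtain b where "p ((T ^^ b) x) = p y"
      using assms by (auto simp: cyc_orbit_def p_funpow_T)
    then obtain a where "y = (P ^^ a) ((T ^^ b) x)"
      using fibre_orbit \<open>y \<in> X\<close> assms funpow_closed T_closed by metis
    then show "y \<in> joint_orbit P T x" unfolding joint_orbit_def by blast
  qed
qed

lemma image_p_joint_orbit:
  assumes "x \<in> X"
  shows "p ` joint_orbit P T x = cyc_orbit \<sigma> (p x)"
proof -
  have "cyc_orbit \<sigma> (p x) \<subseteq> p ` X" using cyc_orbit_subset[OF assms] image_p by simp
  then show ?thesis unfolding joint_orbit_eq_preimage[OF assms] by blast
qed

lemma card_fibre_pos:
  assumes "x \<in> X"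
  shows "0 < c"
proof -
  have "p x \<in> {1..n}" using assms image_p by blast
  moreover have "0 < card {y \<in> X. p y = p x}"
    using assms finite_X by (subst card_gt_0_iff) auto
  ultimately show ?thesis using card_fibre by simp
qed

lemma card_joint_orbit:
  assumes "x \<in> X"
  shows "card (joint_orbit P T x) = c * card (cyc_orbit \<sigma> (p x))"
proof -
  have "joint_orbit P T x = (\<Union>j \<in> cyc_orbit \<sigma> (p x). {y \<in> X. p y = j})"
    using joint_orbit_eq_preimage[OF assms] by blast
  also have "card \<dots> = (\<Sum>j \<in> cyc_orbit \<sigma> (p x). card {y \<in> X. p y = j})"
    using cyc_orbit_subset[OF assms] finite_X
    by (intro card_UN_disjoint) (auto intro: finite_subset)
  also have "\<dots> = c * card (cyc_orbit \<sigma> (p x))"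
    using cyc_orbit_subset[OF assms] by (simp add: card_fibre subset_iff)
  finally show ?thesis .
qed

lemma cycle_type_eq_joint_orbits:
  "cycle_type \<sigma> n = image_mset (\<lambda>U. card U div c) (mset_set (joint_orbit P T ` X))"
proof -
  have blocks: "cyc_orbit \<sigma> ` {1..n} = image p ` joint_orbit P T ` X"
    unfolding image_p[symmetric] image_image using image_p_joint_orbit by simp
  have "inj_on (image p) (joint_orbit P T ` X)"
  proof (rule inj_onI, clarify)
    fix x y assume "x \<in> X" "y \<in> X" "p ` joint_orbit P T x = p ` joint_orbit P T y"
    then have "cyc_orbit \<sigma> (p x) = cyc_orbit \<sigma> (p y)" by (simp add: image_p_joint_orbit)
    then show "joint_orbit P T x = joint_orbit P T y"
      using \<open>x \<in> X\<close> \<open>y \<in> X\<close> by (simp add: joint_orbit_eq_preimage)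
  qed
  then have "cycle_type \<sigma> n = image_mset (card \<circ> image p) (mset_set (joint_orbit P T ` X))"
    unfolding cycle_type_def blocks by (simp add: image_mset_mset_set[symmetric] multiset.map_comp)
  also have "\<dots> = image_mset (\<lambda>U. card U div c) (mset_set (joint_orbit P T ` X))"
    using finite_X by (intro image_mset_cong)
      (auto simp: image_p_joint_orbit card_joint_orbit card_fibre_pos)
  finally show ?thesis .
qed

lemma conjugate:
  assumes g: "g permutes X"
  shows "orbit_fibration X (g \<circ> P \<circ> inv g) (g \<circ> T \<circ> inv g) (p \<circ> inv g) \<sigma> n c"
proof unfold_locales
  have inv_g: "inv g permutes X" using permutes_inv[OF g] .
  note in_X = permutes_in_image[OF g] permutes_in_image[OF inv_g]
  note inverses = permutes_inverses[OF g]
  show "finite X" by (rule finite_X)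
  show "x \<in> X \<Longrightarrow> (g \<circ> P \<circ> inv g) x \<in> X" for x by (simp add: in_X P_closed)
  show "x \<in> X \<Longrightarrow> (g \<circ> T \<circ> inv g) x \<in> X" for x by (simp add: in_X T_closed)
  show "(p \<circ> inv g) ` X = {1..n}" unfolding image_comp[symmetric] permutes_image[OF inv_g] by (rule image_p)
  show "x \<in> X \<Longrightarrow> (p \<circ> inv g) ((g \<circ> P \<circ> inv g) x) = (p \<circ> inv g) x" for x
    by (simp add: inverses in_X p_P)
  show "x \<in> X \<Longrightarrow> (p \<circ> inv g) ((g \<circ> T \<circ> inv g) x) = \<sigma> ((p \<circ> inv g) x)" for x
    by (simp add: inverses in_X p_T)
  show "\<exists>k. y = ((g \<circ> P \<circ> inv g) ^^ k) x"
    if xy: "x \<in> X" "y \<in> X" "(p \<circ> inv g) x = (p \<circ> inv g) y" for x y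
  proof -
    obtain k where "inv g y = (P ^^ k) (inv g x)"
      using fibre_orbit[of "inv g x" "inv g y"] xy by (auto simp: in_X)
    then have "y = (g \<circ> P ^^ k \<circ> inv g) x" by (metis comp_apply inverses(1))
    then show ?thesis by (metis funpow_conjugate permutes_bij[OF g])
  qed
  show "card {x \<in> X. (p \<circ> inv g) x = j} = c" if "j \<in> {1..n}" for j
  proof -
    have "{x \<in> X. (p \<circ> inv g) x = j} = g ` {x \<in> X. p x = j}"
      by (auto simp: in_X inverses image_iff intro!: exI[of _ "inv g _"])
    then show ?thesis
      using card_fibre[OF that] inj_on_subset[OF permutes_inj[OF g]] by (simp add: card_image)
  qed
qed

end


section \<open>Blocks of \<open>{1..2rn}\<close>\<close>

lemma mult_less_add_iff: "(w::nat) < m \<Longrightarrow> m * a < m * b + w + 1 \<longleftrightarrow> a \<le> b"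
proof
  assume "w < m" "m * a < m * b + w + 1"
  then have "m * a < m * (b + 1)" by simp
  then show "a \<le> b" by (simp only: mult_less_cancel1) simp
next
  assume "a \<le> b"
  then have "m * a \<le> m * b" by (rule mult_le_mono2)
  then show "m * a < m * b + w + 1" by linarith
qed

lemma add_le_mult_iff: "(w::nat) < m \<Longrightarrow> m * b + w + 1 \<le> m * a \<longleftrightarrow> b < a"
  using mult_less_add_iff[of w m a b] by linarith

text \<open>\<open>cell r b w\<close> is the point at offset \<open>w\<close> in block \<open>b\<close>, both counted from 0.\<close>
definition cell :: "nat \<Rightarrow> nat \<Rightarrow> nat \<Rightarrow> nat" where
  "cell r b w = 2*r*b + w + 1"

definition block_of :: "nat \<Rightarrow> nat \<Rightarrow> nat" where
  "block_of r x = (x - 1) div (2*r) + 1"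

lemma block_of_cell [simp]: "w < 2*r \<Longrightarrow> block_of r (cell r b w) = b + 1"
  by (simp add: block_of_def cell_def)

lemma Suc_0_le_cell [simp]: "Suc 0 \<le> cell r b w"
  by (simp add: cell_def)

lemma cell_le_iff [simp]: "w < 2*r \<Longrightarrow> cell r b w \<le> 2*r*n \<longleftrightarrow> b < n"
  using add_le_mult_iff[of w "2*r" b n] by (simp add: cell_def)

lemma cell_cases:
  assumes "r > 0" "1 \<le> x"
  obtains b w where "x = cell r b w" "w < 2*r"
proof
  have "2*r*((x - 1) div (2*r)) + (x - 1) mod (2*r) = x - 1" by (rule mult_div_mod_eq)
  then show "x = cell r ((x - 1) div (2*r)) ((x - 1) mod (2*r))"
    using assms(2) unfolding cell_def by linarith
  show "(x - 1) mod (2*r) < 2*r" using assms(1) by simp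
qed

lemma mem_range_iff_block_of:
  assumes "r > 0"
  shows "x \<in> {1..2*r*n} \<longleftrightarrow> 1 \<le> x \<and> block_of r x \<le> n"
proof (cases "1 \<le> x")
  case True
  then obtain b w where "x = cell r b w" "w < 2*r" using cell_cases assms by blast
  then show ?thesis by auto
qed simp

lemma image_block_of:
  assumes "r > 0"
  shows "block_of r ` {1..2*r*n} = {1..n}"
proof
  show "block_of r ` {1..2*r*n} \<subseteq> {1..n}"
    using mem_range_iff_block_of[OF assms] by (auto simp: block_of_def)
  show "{1..n} \<subseteq> block_of r ` {1..2*r*n}"
  proof
    fix j assume "j \<in> {1..n}"
    then have "cell r (j - 1) 0 \<in> {1..2*r*n} \<and> block_of r (cell r (j - 1) 0) = j"
      using assms by auto
    then show "j \<in> block_of r ` {1..2*r*n}" by (metis image_eqI)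
  qed
qed

lemma card_block_fibre:
  assumes "r > 0" "j \<in> {1..n}"
  shows "card {x \<in> {1..2*r*n}. block_of r x = j} = 2*r"
proof -
  have "{x \<in> {1..2*r*n}. block_of r x = j} = cell r (j - 1) ` {..<2*r}"
  proof (intro equalityI subsetI)
    fix x assume x: "x \<in> {x \<in> {1..2*r*n}. block_of r x = j}"
    then obtain b w where "x = cell r b w" "w < 2*r" using cell_cases[OF assms(1), of x] by auto
    then show "x \<in> cell r (j - 1) ` {..<2*r}" using x by auto
  qed (use assms in auto)
  moreover have "inj_on (cell r (j - 1)) {..<2*r}" by (rule inj_onI) (simp add: cell_def)
  ultimately show ?thesis by (simp add: card_image)
qed

text \<open>Since \<open>block_of r 0 = 1\<close> is a junk value, preservation of blocks also demands
  that positions stay positive.\<close>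
definition preserves_blocks :: "nat \<Rightarrow> (nat \<Rightarrow> nat) \<Rightarrow> bool" where
  "preserves_blocks r f \<longleftrightarrow> (\<forall>x \<ge> 1. 1 \<le> f x \<and> block_of r (f x) = block_of r x)"

lemma preserves_blocks_id: "preserves_blocks r id"
  by (simp add: preserves_blocks_def)

lemma preserves_blocks_comp:
  "preserves_blocks r f \<Longrightarrow> preserves_blocks r g \<Longrightarrow> preserves_blocks r (f \<circ> g)"
  by (simp add: preserves_blocks_def)

lemma preserves_blocks_funpow: "preserves_blocks r f \<Longrightarrow> preserves_blocks r (f ^^ k)"
  by (induction k) (simp_all add: preserves_blocks_def)

lemma preserves_blocks_foldr:
  "(\<And>j. j \<in> set js \<Longrightarrow> preserves_blocks r (F j))
    \<Longrightarrow> preserves_blocks r (foldr (\<lambda>j f. F j \<circ> f) js id)"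
  by (induction js) (simp_all add: preserves_blocks_id preserves_blocks_comp)

lemma preserves_blocks_range:
  assumes "r > 0" "preserves_blocks r f" "x \<in> {1..2*r*n}"
  shows "f x \<in> {1..2*r*n}"
  using assms unfolding mem_range_iff_block_of[OF assms(1)] preserves_blocks_def by simp

section \<open>The generators \<open>A\<^sub>j\<close> and \<open>B\<^sub>i\<close> on blocks\<close>

lemma Acyc_cell:
  assumes "j \<ge> 1" "w < 2*r"
  shows "Acyc r j (cell r b w) = cell r b (if b = j - 1 then (w + 1) mod (2*r) else w)"
proof -
  obtain k where j: "j = k + 1" using assms(1) by (metis add.commute le_Suc_ex)
  have "k < b \<Longrightarrow> 2*r*(k + 1) \<le> 2*r*b" by (rule mult_le_mono2) simp
  then show ?thesis
    using assms mult_less_add_iff[of w "2*r" k b] add_le_mult_iff[of w "2*r" b k]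
    unfolding Acyc_def cell_def j by (auto simp: algebra_simps)
qed

lemma preserves_blocks_Acyc:
  assumes "r > 0" "j \<ge> 1"
  shows "preserves_blocks r (Acyc r j)"
  unfolding preserves_blocks_def
proof (intro allI impI)
  fix x :: nat assume "1 \<le> x"
  then obtain b w where "x = cell r b w" "w < 2*r" using cell_cases assms by blast
  moreover have "(w + 1) mod (2*r) < 2*r" using assms by simp
  ultimately show "1 \<le> Acyc r j x \<and> block_of r (Acyc r j x) = block_of r x"
    using assms by (simp add: Acyc_cell)
qed

lemma preserves_blocks_Aprod: "r > 0 \<Longrightarrow> preserves_blocks r (Aprod r n d)"
  unfolding Aprod_def
  by (intro preserves_blocks_foldr preserves_blocks_funpow preserves_blocks_Acyc) auto

lemma preserves_blocks_piperm: "r > 0 \<Longrightarrow> preserves_blocks r (piperm r n)"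
  unfolding piperm_def by (intro preserves_blocks_foldr preserves_blocks_Acyc) auto

lemma foldr_comp_id: "foldr (\<lambda>j f. F j \<circ> f) js h = foldr (\<lambda>j f. F j \<circ> f) js id \<circ> h"
  by (induction js) (simp_all add: comp_assoc)

lemma piperm_Suc: "piperm r (Suc n) = piperm r n \<circ> Acyc r (Suc n)"
  unfolding piperm_def by (simp add: foldr_comp_id[of _ _ "Acyc r (Suc n)"])

lemma piperm_cell:
  "w < 2*r \<Longrightarrow> piperm r n (cell r b w) = cell r b (if b < n then (w + 1) mod (2*r) else w)"
proof (induction n arbitrary: w)
  case 0
  then show ?case by (simp add: piperm_def)
next
  case (Suc n)
  have "(w + 1) mod (2*r) < 2*r" using Suc.prems by simp
  then show ?case using Suc by (auto simp: piperm_Suc Acyc_cell)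
qed

lemma piperm_funpow_cell:
  assumes "b < n" "w < 2*r"
  shows "(piperm r n ^^ k) (cell r b w) = cell r b ((w + k) mod (2*r))"
proof (induction k)
  case (Suc k)
  have "(w + k) mod (2*r) < 2*r" using assms(2) by simp
  then show ?case using Suc assms by (simp add: piperm_cell mod_Suc_eq)
qed (use assms in simp)

lemma piperm_fibre_transitive:
  assumes "r > 0" "x \<in> {1..2*r*n}" "y \<in> {1..2*r*n}" "block_of r x = block_of r y"
  shows "\<exists>k. y = (piperm r n ^^ k) x"
proof -
  obtain b w where x: "x = cell r b w" "w < 2*r" using cell_cases[OF assms(1), of x] assms(2) by auto
  obtain b' w' where y: "y = cell r b' w'" "w' < 2*r" using cell_cases[OF assms(1), of y] assms(3) by auto
  have "b' = b" "b < n" using assms x y by auto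
  then have "(piperm r n ^^ (w' + 2*r - w)) x = y"
    using x y by (simp add: piperm_funpow_cell)
  then show ?thesis by metis
qed

lemma Bgen_cell:
  assumes "i \<ge> 1" "w < 2*r"
  shows "Bgen r i (cell r c w) = cell r (transpose (i - 1) i c) w"
proof -
  obtain k where i: "i = k + 1" using assms(1) by (metis add.commute le_Suc_ex)
  have "k < c \<Longrightarrow> 2*r*(k + 1) \<le> 2*r*c" "k + 1 < c \<Longrightarrow> 2*r*(k + 2) \<le> 2*r*c"
    by (rule mult_le_mono2, simp)+
  then show ?thesis
    using assms mult_less_add_iff[of w "2*r" k c] add_le_mult_iff[of w "2*r" c k]
      mult_less_add_iff[of w "2*r" "k + 1" c] add_le_mult_iff[of w "2*r" c "k + 1"]
    unfolding Bgen_def cell_def i transpose_def by (auto simp: algebra_simps)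
qed

lemma Bgroup_cell:
  assumes "B \<in> Bgroup r n"
  obtains \<tau> where "\<And>b. b < n \<Longrightarrow> \<tau> b < n"
    and "\<And>b w. b < n \<Longrightarrow> w < 2*r \<Longrightarrow> B (cell r b w) = cell r (\<tau> b) w"
proof -
  from assms have "\<exists>\<tau>. (\<forall>b<n. \<tau> b < n) \<and> (\<forall>b<n. \<forall>w<2*r. B (cell r b w) = cell r (\<tau> b) w)"
  proof induction
    case Bgroup_id
    show ?case by (rule exI[of _ id]) simp
  next
    case (Bgroup_step B i)
    then obtain \<tau> where "\<forall>b<n. \<tau> b < n" "\<forall>b<n. \<forall>w<2*r. B (cell r b w) = cell r (\<tau> b) w"
      by blast
    then show ?case
      using Bgroup_step.hyps by (intro exI[of _ "transpose (i - 1) i \<circ> \<tau>"])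
        (auto simp: Bgen_cell transpose_def)
  qed
  then show ?thesis using that by blast
qed

lemma Bgroup_block_of:
  assumes "B \<in> Bgroup r n" "r > 0" "x \<in> {1..2*r*n}"
  shows "B x \<in> {1..2*r*n}" and "block_of r (B x) = Phi r n B (block_of r x)"
proof -
  obtain \<tau> where \<tau>: "\<And>b. b < n \<Longrightarrow> \<tau> b < n"
    "\<And>b w. b < n \<Longrightarrow> w < 2*r \<Longrightarrow> B (cell r b w) = cell r (\<tau> b) w"
    using Bgroup_cell[OF assms(1)] by blast
  obtain b w where x: "x = cell r b w" "w < 2*r" using cell_cases[OF assms(2), of x] assms(3) by auto
  then have "b < n" using assms(3) by simp
  then show "B x \<in> {1..2*r*n}" using x \<tau> by simp
  have "Phi r n B (b + 1) = block_of r (B (cell r b 0))"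
    using \<open>b < n\<close> by (simp add: Phi_def block_of_def cell_def)
  also have "\<dots> = \<tau> b + 1" using \<tau> \<open>b < n\<close> assms(2) by simp
  finally have "Phi r n B (b + 1) = \<tau> b + 1" .
  then show "block_of r (B x) = Phi r n B (block_of r x)" using x \<tau> \<open>b < n\<close> by simp
qed

lemma orbit_fibration_blocks:
  assumes r: "r > 0" and B: "B \<in> Bgroup r n"
  shows "orbit_fibration {1..2*r*n} (piperm r n) (Aprod r n d \<circ> B) (block_of r) (Phi r n B) n (2*r)"
proof unfold_locales
  note piperm = preserves_blocks_piperm[OF r, of n] and Aprod = preserves_blocks_Aprod[OF r, of n d]
  show "finite {1..2*r*n}" by simp
  show "x \<in> {1..2*r*n} \<Longrightarrow> piperm r n x \<in> {1..2*r*n}" for x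
    by (rule preserves_blocks_range[OF r piperm])
  show "x \<in> {1..2*r*n} \<Longrightarrow> (Aprod r n d \<circ> B) x \<in> {1..2*r*n}" for x
    unfolding comp_apply by (intro preserves_blocks_range[OF r Aprod] Bgroup_block_of(1)[OF B r])
  show "block_of r ` {1..2*r*n} = {1..n}" by (rule image_block_of[OF r])
  show "x \<in> {1..2*r*n} \<Longrightarrow> block_of r (piperm r n x) = block_of r x" for x
    using piperm by (simp add: preserves_blocks_def)
  show "x \<in> {1..2*r*n} \<Longrightarrow> block_of r ((Aprod r n d \<circ> B) x) = Phi r n B (block_of r x)" for x
    using Aprod Bgroup_block_of[OF B r, of x] by (simp add: preserves_blocks_def)
  show "x \<in> {1..2*r*n} \<Longrightarrow> y \<in> {1..2*r*n} \<Longrightarrow> block_of r x = block_of r y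
      \<Longrightarrow> \<exists>k. y = (piperm r n ^^ k) x" for x y
    by (rule piperm_fibre_transitive[OF r])
  show "j \<in> {1..n} \<Longrightarrow> card {x \<in> {1..2*r*n}. block_of r x = j} = 2*r" for j
    by (rule card_block_fibre[OF r])
qed

theorem lemma2p17:
  fixes r n :: nat and t g B B' :: "nat \<Rightarrow> nat" and d e :: "nat \<Rightarrow> nat"
  assumes "r \<ge> 2" and "n \<ge> 2"
    and "g permutes {1..2*r*n}"
    and "t permutes {1..2*r*n}"
    and "t \<circ> piperm r n = piperm r n \<circ> t"
    and "g \<circ> piperm r n \<circ> inv g = t"
    and "B \<in> Bgroup r n" and "B' \<in> Bgroup r n"
    and "\<forall>j. d j < 2*r" and "\<forall>j. e j < 2*r"
    and "t = Aprod r n d \<circ> B"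
    and "inv g \<circ> piperm r n \<circ> g = Aprod r n e \<circ> B'"
  shows "cycle_type (Phi r n B) n = cycle_type (Phi r n B') n"
proof -
  have r: "r > 0" using assms(1) by simp
  interpret t_side: orbit_fibration "{1..2*r*n}" "piperm r n" t "block_of r" "Phi r n B" n "2*r"
    using orbit_fibration_blocks[OF r assms(7)] by (simp add: assms(11))
  have \<pi>_fibration: "orbit_fibration {1..2*r*n} (piperm r n) (inv g \<circ> piperm r n \<circ> g)
      (block_of r) (Phi r n B') n (2*r)"
    using orbit_fibration_blocks[OF r assms(8)] by (simp add: assms(12))
  have \<pi>_conjugate: "g \<circ> (inv g \<circ> piperm r n \<circ> g) \<circ> inv g = piperm r n"
    by (simp add: fun_eq_iff permutes_inverses[OF assms(3)])
  interpret \<pi>_side: orbit_fibration "{1..2*r*n}" t "piperm r n" "block_of r \<circ> inv g"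
      "Phi r n B'" n "2*r"
    using orbit_fibration.conjugate[OF \<pi>_fibration assms(3)] unfolding assms(6) \<pi>_conjugate .
  show ?thesis
    unfolding t_side.cycle_type_eq_joint_orbits \<pi>_side.cycle_type_eq_joint_orbits
      joint_orbit_commute[OF assms(5)] ..
qed

end
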